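(* Let $G$ be a finite group (with the discrete topology), let $G_1, G_2$ be subgroups of $G$, and let $\varphi \colon \widetilde G \to G$ be a continuous surjective homomorphism from a profinite group $\widetilde G$ such that the profinite groups $\varphi^{-1}(G_1)$ and $\varphi^{-1}(G_2)$ are not isomorphic. Assume that for every positive integer $n$, $\widetilde G$ has only finitely many open subgroups of index $n$. Then there exist a finite group $H$, a continuous surjective homomorphism $\psi \colon \widetilde G \to H$, and a group homomorphism $\theta \colon H \to G$ such that $\varphi = \theta \circ \psi$ and $\theta^{-1}(G_1)$ and $\theta^{-1}(G_2)$ are not isomorphic. *)

theory Defs
  imports "HOL-Analysis.Analysis" "HOL-Algebra.Algebra"
begin

definition topological_group :: "('a, 'b) monoid_scheme \<Rightarrow> 'a topology \<Rightarrow> bool" where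
  "topological_group G T \<longleftrightarrow> group G \<and> topspace T = carrier G \<and>
     continuous_map (prod_topology T T) T (\<lambda>(x, y). x \<otimes>\<^bsub>G\<^esub> y) \<and>
     continuous_map T T (\<lambda>x. inv\<^bsub>G\<^esub> x)"

definition totally_disconnected_space :: "'a topology \<Rightarrow> bool" where
  "totally_disconnected_space T \<longleftrightarrow> (\<forall>S. connectedin T S \<longrightarrow> (\<exists>a. S \<subseteq> {a}))"

definition profinite_group :: "('a, 'b) monoid_scheme \<Rightarrow> 'a topology \<Rightarrow> bool" where
  "profinite_group G T \<longleftrightarrow> topological_group G T \<and> compact_space T \<and>
     Hausdorff_space T \<and> totally_disconnected_space T"

definition top_group_isomorphic ::
  "('a, 'c) monoid_scheme \<Rightarrow> 'a topology \<Rightarrow> ('b, 'd) monoid_scheme \<Rightarrow> 'b topology \<Rightarrow> bool" where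
  "top_group_isomorphic G T H S \<longleftrightarrow> (\<exists>f. f \<in> iso G H \<and> homeomorphic_map T S f)"

definition open_subgroups_of_index :: "('a, 'b) monoid_scheme \<Rightarrow> 'a topology \<Rightarrow> nat \<Rightarrow> 'a set set" where
  "open_subgroups_of_index G T n =
     {K. subgroup K G \<and> openin T K \<and> card (rcosets\<^bsub>G\<^esub> K) = n}"

end

theory Submission
  imports Defs
begin

(* Write A_i for the preimage of G_i under phi; these are open subgroups of the profinite group.
   For an open subgroup A let M_k(A) be the intersection of its open subgroups of index at most k.
   Smallness makes this a finite intersection, so M_k(A) is open; since open subgroups separate the
   points of a profinite group, the M_k(A) shrink to the identity and form a neighbourhood base.
   If the conclusion failed, A_1/N and A_2/N would be isomorphic for every open normal subgroup N
   inside the kernel of phi (take H to be the quotient by N). Once N is contained in M_k(A_1) and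
   M_k(A_2), such an isomorphism permutes the subgroups of index at most k containing N, so lifts
   f and g of it and of its inverse are mutually inverse homomorphisms modulo M_k(A_1) and M_k(A_2),
   and f is uniformly continuous at level k. For each k these are closed conditions on (f, g) in
   the compact space of pairs of maps, so some pair satisfies all of them; its first component is
   then an isomorphism of topological groups A_1 -> A_2. *)

lemma (in group) inv_mult_cancel_left [simp]:
  "a \<in> carrier G \<Longrightarrow> b \<in> carrier G \<Longrightarrow> inv a \<otimes> (a \<otimes> b) = b"
  by (simp add: m_assoc[symmetric])

lemma (in group) mult_inv_cancel_left [simp]:
  "a \<in> carrier G \<Longrightarrow> b \<in> carrier G \<Longrightarrow> a \<otimes> (inv a \<otimes> b) = b"
  by (simp add: m_assoc[symmetric])

lemma (in group) rcos_eq_iff: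
  assumes H: "subgroup H G" and xy: "x \<in> carrier G" "y \<in> carrier G"
  shows "H #> x = H #> y \<longleftrightarrow> x \<otimes> inv y \<in> H"
proof -
  have "H #> x = H #> y \<longleftrightarrow> x \<in> H #> y"
    using rcos_self[OF xy(1) H] repr_independence[of x H y] xy H by auto
  also have "\<dots> \<longleftrightarrow> x \<otimes> inv y \<in> H"
    using subgroup.rcos_module[OF H is_group xy(2,1)] .
  finally show ?thesis .
qed

lemma (in group) subgroup_mem_iff_of_mult_inv:
  assumes H: "subgroup H G" and ab: "a \<otimes> inv b \<in> H" "a \<in> carrier G" "b \<in> carrier G"
  shows "a \<in> H \<longleftrightarrow> b \<in> H"
proof -
  interpret H: subgroup H G by fact
  have "a = (a \<otimes> inv b) \<otimes> b" "b = inv (a \<otimes> inv b) \<otimes> a"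
    using ab by (simp_all add: m_assoc inv_mult_group)
  moreover have "(a \<otimes> inv b) \<otimes> b \<in> H" if "b \<in> H" using ab that by blast
  moreover have "inv (a \<otimes> inv b) \<otimes> a \<in> H" if "a \<in> H" using ab that by blast
  ultimately show ?thesis by auto
qed

lemma (in group) subgroup_rcos_stabilizer:
  assumes "C \<subseteq> carrier G"
  shows "subgroup {g \<in> carrier G. C #> g = C} G"
proof
  fix g h assume "g \<in> {g \<in> carrier G. C #> g = C}" "h \<in> {g \<in> carrier G. C #> g = C}"
  then show "g \<otimes> h \<in> {g \<in> carrier G. C #> g = C}"
    using assms by (simp add: coset_mult_assoc[symmetric])
next
  fix g assume g: "g \<in> {g \<in> carrier G. C #> g = C}"
  then have "C #> inv g = (C #> g) #> inv g" by simp
  also have "\<dots> = C #> (g \<otimes> inv g)" using g assms by (intro coset_mult_assoc) auto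
  finally show "inv g \<in> {g \<in> carrier G. C #> g = C}" using g assms by simp
qed (use assms in auto)

lemma (in group) rcosets_subset_image:
  assumes W: "subgroup W G" and S: "S \<subseteq> carrier G" "carrier G = (\<Union>a\<in>S. W #> a)"
  shows "rcosets W \<subseteq> (\<lambda>a. W #> a) ` S"
proof
  fix C assume "C \<in> rcosets W"
  then obtain x where x: "x \<in> carrier G" "C = W #> x" unfolding RCOSETS_def by blast
  then obtain a where a: "a \<in> S" "x \<in> W #> a" using S by blast
  then have "W #> a = W #> x" using repr_independence[OF a(2) _ W] S by auto
  then show "C \<in> (\<lambda>a. W #> a) ` S" using x a by auto
qed

lemma (in group_hom) subgroup_preimage:
  assumes "subgroup S H"
  shows "subgroup {x \<in> carrier G. h x \<in> S} G"
proof
  fix x y assume "x \<in> {x \<in> carrier G. h x \<in> S}" "y \<in> {x \<in> carrier G. h x \<in> S}"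
  then show "x \<otimes>\<^bsub>G\<^esub> y \<in> {x \<in> carrier G. h x \<in> S}" using subgroup.m_closed[OF assms] by simp
next
  fix x assume "x \<in> {x \<in> carrier G. h x \<in> S}"
  then show "inv\<^bsub>G\<^esub> x \<in> {x \<in> carrier G. h x \<in> S}" using subgroup.m_inv_closed[OF assms] by simp
qed (use subgroup.one_closed[OF assms] in auto)

lemma (in group_hom) FactGroup_universal_kernel_preimage:
  assumes "N \<lhd> G" "N \<subseteq> kernel G H h"
  obtains g where "g \<in> hom (G Mod N) H" "\<And>x. x \<in> carrier G \<Longrightarrow> g (N #>\<^bsub>G\<^esub> x) = h x"
    "\<And>S. {y \<in> carrier (G Mod N). g y \<in> S} = (\<lambda>x. N #>\<^bsub>G\<^esub> x) ` {x \<in> carrier G. h x \<in> S}"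
proof -
  obtain g where g: "g \<in> hom (G Mod N) H" "\<And>x. x \<in> carrier G \<Longrightarrow> g (N #>\<^bsub>G\<^esub> x) = h x"
    using FactGroup_universal_kernel[OF assms] by blast
  moreover have "{y \<in> carrier (G Mod N). g y \<in> S} = (\<lambda>x. N #>\<^bsub>G\<^esub> x) ` {x \<in> carrier G. h x \<in> S}" for S
    using g(2) by (auto simp: carrier_FactGroup)
  ultimately show ?thesis using that by blast
qed

subsection \<open>Lifting isomorphisms of quotients\<close>

context group
begin

text \<open>\<open>F\<close> induces a surjective homomorphism from \<open>A/N\<close> onto \<open>B/N\<close>.\<close>

definition epi_mod :: "'a set \<Rightarrow> 'a set \<Rightarrow> 'a set \<Rightarrow> ('a \<Rightarrow> 'a) \<Rightarrow> bool" where
  "epi_mod N A B F \<longleftrightarrow> (\<forall>x\<in>A. F x \<in> B) \<and>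
     (\<forall>x\<in>A. \<forall>y\<in>A. F x \<otimes> F y \<otimes> inv (F (x \<otimes> y)) \<in> N) \<and>
     (\<forall>x\<in>N. F x \<in> N) \<and> (\<forall>z\<in>B. \<exists>x\<in>A. z \<otimes> inv (F x) \<in> N)"

lemma epi_modD:
  assumes "epi_mod N A B F"
  shows "x \<in> A \<Longrightarrow> F x \<in> B"
    and "x \<in> A \<Longrightarrow> y \<in> A \<Longrightarrow> F x \<otimes> F y \<otimes> inv (F (x \<otimes> y)) \<in> N"
    and "x \<in> N \<Longrightarrow> F x \<in> N"
    and "z \<in> B \<Longrightarrow> \<exists>x\<in>A. z \<otimes> inv (F x) \<in> N"
  using assms unfolding epi_mod_def by blast+

lemma epi_mod_inv:
  assumes N: "subgroup N G" and A: "subgroup A G" and B: "subgroup B G"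
    and F: "epi_mod N A B F" and x: "x \<in> A"
  shows "F x \<otimes> F (inv x) \<in> N"
proof -
  have x': "inv x \<in> A" "x \<in> carrier G"
    using subgroup.m_inv_closed[OF A x] subgroup.mem_carrier[OF A x] by auto
  have "F x \<in> B" "F (inv x) \<in> B" "F \<one> \<in> B"
    using epi_modD(1)[OF F] x x'(1) subgroup.one_closed[OF A] by blast+
  then have c: "F x \<in> carrier G" "F (inv x) \<in> carrier G" "F \<one> \<in> carrier G"
    using subgroup.subset[OF B] by blast+
  have "F x \<otimes> F (inv x) \<otimes> inv (F \<one>) \<in> N"
    using epi_modD(2)[OF F x x'(1)] x'(2) by simp
  moreover have "F \<one> \<in> N" using epi_modD(3)[OF F subgroup.one_closed[OF N]] .
  ultimately have "F x \<otimes> F (inv x) \<otimes> inv (F \<one>) \<otimes> F \<one> \<in> N" by (rule subgroup.m_closed[OF N])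
  then show ?thesis using c by (simp add: m_assoc)
qed

lemma epi_mod_mult_mem_iff:
  assumes N: "subgroup N G" and A: "subgroup A G" and B: "subgroup B G" and V: "subgroup V G"
    and F: "epi_mod N A B F" and NV: "N \<subseteq> V" and xy: "x \<in> A" "y \<in> A"
  shows "F (x \<otimes> y) \<in> V \<longleftrightarrow> F x \<otimes> F y \<in> V"
proof -
  have Fc: "F z \<in> carrier G" if "z \<in> A" for z
    using epi_modD(1)[OF F that] subgroup.subset[OF B] by blast
  have "F x \<otimes> F y \<otimes> inv (F (x \<otimes> y)) \<in> V" using epi_modD(2)[OF F xy] NV by blast
  moreover have "F x \<otimes> F y \<in> carrier G" "F (x \<otimes> y) \<in> carrier G"
    using Fc xy subgroup.m_closed[OF A xy] by auto
  ultimately show ?thesis using subgroup_mem_iff_of_mult_inv[OF V] by metis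
qed

lemma epi_mod_preimage_subgroup:
  assumes N: "subgroup N G" and A: "subgroup A G" and B: "subgroup B G" and V: "subgroup V G"
    and F: "epi_mod N A B F" and NV: "N \<subseteq> V"
  shows "subgroup {x \<in> A. F x \<in> V} G"
proof
  show "{x \<in> A. F x \<in> V} \<subseteq> carrier G" using subgroup.subset[OF A] by blast
  show "\<one> \<in> {x \<in> A. F x \<in> V}"
    using epi_modD(3)[OF F subgroup.one_closed[OF N]] NV subgroup.one_closed[OF A] by blast
next
  fix x y assume "x \<in> {x \<in> A. F x \<in> V}" "y \<in> {x \<in> A. F x \<in> V}"
  then have "x \<in> A" "y \<in> A" "F x \<otimes> F y \<in> V" using subgroup.m_closed[OF V] by auto
  then show "x \<otimes> y \<in> {x \<in> A. F x \<in> V}"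
    using epi_mod_mult_mem_iff[OF N A B V F NV] subgroup.m_closed[OF A] by blast
next
  fix x assume "x \<in> {x \<in> A. F x \<in> V}"
  then have x: "x \<in> A" "F x \<in> V" by auto
  have "F x \<otimes> F (inv x) \<in> V" using epi_mod_inv[OF N A B F x(1)] NV by blast
  with x(2) have "inv (F x) \<otimes> (F x \<otimes> F (inv x)) \<in> V"
    using subgroup.m_closed[OF V] subgroup.m_inv_closed[OF V] by blast
  moreover have "F x \<in> carrier G" "F (inv x) \<in> carrier G"
    using epi_modD(1)[OF F] x(1) subgroup.m_inv_closed[OF A x(1)] subgroup.subset[OF B] by blast+
  ultimately show "inv x \<in> {x \<in> A. F x \<in> V}" using subgroup.m_inv_closed[OF A x(1)] by simp
qed

lemma epi_mod_if_lifts_FactGroup_iso: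
  assumes N: "N \<lhd> G" and A: "subgroup A G" and B: "subgroup B G" and NA: "N \<subseteq> A"
    and h: "h \<in> iso ((G Mod N)\<lparr>carrier := (\<lambda>x. N #> x) ` A\<rparr>) ((G Mod N)\<lparr>carrier := (\<lambda>x. N #> x) ` B\<rparr>)"
    and FB: "\<And>x. x \<in> A \<Longrightarrow> F x \<in> B" and F: "\<And>x. x \<in> A \<Longrightarrow> N #> F x = h (N #> x)"
  shows "epi_mod N A B F"
proof -
  interpret N: normal N G by fact
  interpret Q: group "G Mod N" by (rule N.factorgroup_is_group)
  interpret \<pi>: group_hom G "G Mod N" "\<lambda>x. N #> x"
    by (intro group_hom.intro group_hom_axioms.intro is_group Q.is_group N.r_coset_hom_Mod)
  let ?PA = "(\<lambda>x. N #> x) ` A" and ?PB = "(\<lambda>x. N #> x) ` B"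
  have Ac: "A \<subseteq> carrier G" and Bc: "B \<subseteq> carrier G"
    using subgroup.subset[OF A] subgroup.subset[OF B] by auto
  have hb: "bij_betw h ?PA ?PB"
    and hhom: "h \<in> hom ((G Mod N)\<lparr>carrier := ?PA\<rparr>) ((G Mod N)\<lparr>carrier := ?PB\<rparr>)"
    using h unfolding iso_def by auto
  have "h N = N"
    using hom_one[OF hhom Q.subgroup_imp_group Q.subgroup_imp_group] \<pi>.subgroup_img_is_subgroup A B
    by simp
  have Fc: "F x \<in> carrier G" if "x \<in> A" for x using FB that Bc by blast
  have cos_eq: "N #> x = N #> y \<longleftrightarrow> x \<otimes> inv y \<in> N" if "x \<in> carrier G" "y \<in> carrier G" for x y
    using rcos_eq_iff[OF N.subgroup_axioms that] .
  show ?thesis unfolding epi_mod_def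
  proof (intro conjI ballI)
    fix x y assume xy: "x \<in> A" "y \<in> A"
    have "(N #> x) <#> (N #> y) = N #> (x \<otimes> y)" using xy Ac by (intro N.rcos_sum) auto
    then have "h (N #> (x \<otimes> y)) = h (N #> x) <#> h (N #> y)"
      using hom_mult[OF hhom, of "N #> x" "N #> y"] xy by simp
    then have "N #> (F x \<otimes> F y) = N #> F (x \<otimes> y)"
      using N.rcos_sum Fc F xy subgroup.m_closed[OF A xy] by simp
    moreover have "F x \<otimes> F y \<in> carrier G" "F (x \<otimes> y) \<in> carrier G"
      using Fc xy subgroup.m_closed[OF A xy] by auto
    ultimately show "F x \<otimes> F y \<otimes> inv (F (x \<otimes> y)) \<in> N" using cos_eq by blast
  next
    fix x assume "x \<in> N"
    then have "N #> F x = N #> \<one>" using F NA \<open>h N = N\<close> N.rcos_const[OF is_group] N.subset by auto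
    moreover have "F x \<in> carrier G" using Fc NA \<open>x \<in> N\<close> by blast
    ultimately show "F x \<in> N" using cos_eq[of "F x" \<one>] by simp
  next
    fix z assume "z \<in> B"
    then have "N #> z \<in> h ` ?PA" using bij_betw_imp_surj_on[OF hb] by blast
    then obtain x where x: "x \<in> A" "N #> z = N #> F x" using F by auto
    then show "\<exists>x\<in>A. z \<otimes> inv (F x) \<in> N" using cos_eq Fc \<open>z \<in> B\<close> Bc by blast
  qed (use FB in blast)
qed

lemma FactGroup_iso_lift:
  assumes N: "N \<lhd> G" and A: "subgroup A G" and B: "subgroup B G" and NA: "N \<subseteq> A"
    and h: "h \<in> iso ((G Mod N)\<lparr>carrier := (\<lambda>x. N #> x) ` A\<rparr>) ((G Mod N)\<lparr>carrier := (\<lambda>x. N #> x) ` B\<rparr>)"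
  obtains F where "epi_mod N A B F" "\<And>x. x \<in> A \<Longrightarrow> N #> F x = h (N #> x)"
proof -
  have "\<forall>x\<in>A. \<exists>z\<in>B. N #> z = h (N #> x)"
    using bij_betwE[of h "(\<lambda>x. N #> x) ` A" "(\<lambda>x. N #> x) ` B"] h unfolding iso_def by force
  then obtain F where "\<And>x. x \<in> A \<Longrightarrow> F x \<in> B \<and> N #> F x = h (N #> x)" by metis
  with epi_mod_if_lifts_FactGroup_iso[OF N A B NA h] that show ?thesis by blast
qed

lemma FactGroup_iso_lifts:
  assumes N: "N \<lhd> G" and A: "subgroup A G" and B: "subgroup B G" and NA: "N \<subseteq> A" and NB: "N \<subseteq> B"
    and h: "h \<in> iso ((G Mod N)\<lparr>carrier := (\<lambda>x. N #> x) ` A\<rparr>) ((G Mod N)\<lparr>carrier := (\<lambda>x. N #> x) ` B\<rparr>)"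
  obtains F F' where "epi_mod N A B F" "epi_mod N B A F'"
    "\<And>x. x \<in> A \<Longrightarrow> F' (F x) \<otimes> inv x \<in> N" "\<And>z. z \<in> B \<Longrightarrow> F (F' z) \<otimes> inv z \<in> N"
proof -
  interpret N: normal N G by fact
  interpret Q: group "G Mod N" by (rule N.factorgroup_is_group)
  interpret \<pi>: group_hom G "G Mod N" "\<lambda>x. N #> x"
    by (intro group_hom.intro group_hom_axioms.intro is_group Q.is_group N.r_coset_hom_Mod)
  let ?PA = "(\<lambda>x. N #> x) ` A" and ?PB = "(\<lambda>x. N #> x) ` B"
  have "group ((G Mod N)\<lparr>carrier := ?PA\<rparr>)"
    using Q.subgroup_imp_group \<pi>.subgroup_img_is_subgroup[OF A] by blast
  from group.iso_set_sym[OF this h]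
  have h': "inv_into ?PA h \<in> iso ((G Mod N)\<lparr>carrier := ?PB\<rparr>) ((G Mod N)\<lparr>carrier := ?PA\<rparr>)"
    by simp
  obtain F where F: "epi_mod N A B F" "\<And>x. x \<in> A \<Longrightarrow> N #> F x = h (N #> x)"
    using FactGroup_iso_lift[OF N A B NA h] by blast
  obtain F' where F': "epi_mod N B A F'" "\<And>z. z \<in> B \<Longrightarrow> N #> F' z = inv_into ?PA h (N #> z)"
    using FactGroup_iso_lift[OF N B A NB h'] by blast
  have hb: "bij_betw h ?PA ?PB" using h unfolding iso_def by auto
  have FB: "F x \<in> B" if "x \<in> A" for x using epi_modD(1)[OF F(1) that] .
  have F'A: "F' z \<in> A" if "z \<in> B" for z using epi_modD(1)[OF F'(1) that] .
  have cos_eq: "N #> x = N #> y \<Longrightarrow> x \<otimes> inv y \<in> N" if "x \<in> carrier G" "y \<in> carrier G" for x y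
    using rcos_eq_iff[OF N.subgroup_axioms that] by blast
  have "F' (F x) \<otimes> inv x \<in> N" if x: "x \<in> A" for x
  proof -
    have "N #> F' (F x) = inv_into ?PA h (h (N #> x))" using F F' FB x by simp
    also have "\<dots> = N #> x" using inv_into_f_f[OF bij_betw_imp_inj_on[OF hb]] x by blast
    finally show ?thesis
      using cos_eq F'A FB x subgroup.subset[OF A] by blast
  qed
  moreover have "F (F' z) \<otimes> inv z \<in> N" if z: "z \<in> B" for z
  proof -
    have "N #> F (F' z) = h (inv_into ?PA h (N #> z))" using F F' F'A z by simp
    also have "\<dots> = N #> z"
      using f_inv_into_f[of "N #> z" h ?PA] bij_betw_imp_surj_on[OF hb] z by blast
    finally show ?thesis
      using cos_eq F'A FB z subgroup.subset[OF A] subgroup.subset[OF B] by blast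
  qed
  ultimately show ?thesis using that F(1) F'(1) by blast
qed

lemma epi_mod_preimage_rcos_cover:
  assumes N: "subgroup N G" and A: "subgroup A G" and B: "subgroup B G" and V: "subgroup V G"
    and F: "epi_mod N A B F" and NV: "N \<subseteq> V"
    and S: "finite S" "S \<subseteq> B" "B = (\<Union>a\<in>S. V #> a)"
  obtains S' where "finite S'" "card S' \<le> card S" "S' \<subseteq> A"
    "A = (\<Union>a\<in>S'. {x \<in> A. F x \<in> V} #> a)"
proof -
  define U where "U = {x \<in> A. F x \<in> V}"
  have U: "subgroup U G" unfolding U_def using epi_mod_preimage_subgroup[OF N A B V F NV] .
  have Ac: "A \<subseteq> carrier G" using subgroup.subset[OF A] .
  have Fc: "F x \<in> carrier G" if "x \<in> A" for x
    using epi_modD(1)[OF F that] subgroup.subset[OF B] by blast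
  have "\<forall>b\<in>S. \<exists>a\<in>A. b \<otimes> inv (F a) \<in> N" using epi_modD(4)[OF F] S(2) by blast
  then obtain c where c: "\<And>b. b \<in> S \<Longrightarrow> c b \<in> A \<and> b \<otimes> inv (F (c b)) \<in> N"
    by metis
  have "A \<subseteq> (\<Union>a\<in>c ` S. U #> a)"
  proof
    fix x assume x: "x \<in> A"
    then obtain b where b: "b \<in> S" "F x \<in> V #> b" using S(3) epi_modD(1)[OF F] by blast
    have bc: "b \<in> carrier G" using b S(2) subgroup.subset[OF B] by blast
    have cb: "c b \<in> A" "b \<otimes> inv (F (c b)) \<in> V" using c b(1) NV by auto
    have "F x \<otimes> inv b \<in> V" using subgroup.rcos_module_imp[OF V is_group bc b(2)] .
    moreover have "F (c b) \<otimes> F (inv (c b)) \<in> V" using epi_mod_inv[OF N A B F cb(1)] NV by blast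
    ultimately have "(F x \<otimes> inv b) \<otimes> (b \<otimes> inv (F (c b))) \<otimes> (F (c b) \<otimes> F (inv (c b))) \<in> V"
      using cb(2) subgroup.m_closed[OF V] by blast
    moreover have "F (inv (c b)) \<in> carrier G" using Fc subgroup.m_inv_closed[OF A cb(1)] by blast
    ultimately have "F x \<otimes> F (inv (c b)) \<in> V" using x cb(1) bc Fc by (simp add: m_assoc)
    then have "x \<otimes> inv (c b) \<in> U"
      unfolding U_def using epi_mod_mult_mem_iff[OF N A B V F NV x subgroup.m_inv_closed[OF A cb(1)]]
        subgroup.m_closed[OF A x subgroup.m_inv_closed[OF A cb(1)]] by blast
    then have "x \<in> U #> c b"
      using subgroup.rcos_module_rev[OF U is_group, of "c b" x] x cb(1) Ac by blast
    then show "x \<in> (\<Union>a\<in>c ` S. U #> a)" using b(1) by blast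
  qed
  moreover have "(\<Union>a\<in>c ` S. U #> a) \<subseteq> A"
    using c subgroup.m_closed[OF A] unfolding U_def r_coset_def by auto
  moreover have "card (c ` S) \<le> card S" using card_image_le[OF S(1)] .
  moreover have "c ` S \<subseteq> A" "finite (c ` S)" using c S(1) by auto
  ultimately show ?thesis using that unfolding U_def by blast
qed

end

lemma closedin_Collect_conj:
  assumes "closedin Z {x \<in> topspace Z. P x}" "closedin Z {x \<in> topspace Z. Q x}"
  shows "closedin Z {x \<in> topspace Z. P x \<and> Q x}"
proof -
  have "{x \<in> topspace Z. P x \<and> Q x} = {x \<in> topspace Z. P x} \<inter> {x \<in> topspace Z. Q x}" by blast
  then show ?thesis using closedin_Int[OF assms] by simp
qed

lemma closedin_Collect_imp:
  assumes "closedin Z {x \<in> topspace Z. \<not> P x}" "closedin Z {x \<in> topspace Z. Q x}"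
  shows "closedin Z {x \<in> topspace Z. P x \<longrightarrow> Q x}"
proof -
  have "{x \<in> topspace Z. P x \<longrightarrow> Q x} = {x \<in> topspace Z. \<not> P x} \<union> {x \<in> topspace Z. Q x}" by blast
  then show ?thesis using closedin_Un[OF assms] by simp
qed

lemma closedin_Collect_ball:
  assumes "\<And>i. i \<in> I \<Longrightarrow> closedin Z {x \<in> topspace Z. P i x}"
  shows "closedin Z {x \<in> topspace Z. \<forall>i\<in>I. P i x}"
proof (cases "I = {}")
  case False
  have "{x \<in> topspace Z. \<forall>i\<in>I. P i x} = (\<Inter>i\<in>I. {x \<in> topspace Z. P i x})"
    using False by auto
  moreover have "closedin Z (\<Inter>i\<in>I. {x \<in> topspace Z. P i x})"
    using assms False by (intro closedin_Inter) auto
  ultimately show ?thesis by simp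
qed simp

lemma closedin_continuous_map_preimage_not_mem:
  assumes "continuous_map Z Y f" "openin Y U"
  shows "closedin Z {x \<in> topspace Z. f x \<notin> U}"
proof -
  have "{x \<in> topspace Z. f x \<notin> U} = topspace Z - {x \<in> topspace Z. f x \<in> U}" by auto
  then show ?thesis using openin_continuous_map_preimage[OF assms] by (simp add: closedin_diff)
qed

section \<open>Topological groups\<close>

locale top_group = group G for G :: "('a, 'b) monoid_scheme" (structure) +
  fixes T :: "'a topology"
  assumes topological_group: "topological_group G T"
begin

lemma topspace_eq [simp]: "topspace T = carrier G"
  using topological_group by (simp add: topological_group_def)

lemma continuous_map_mult:
  assumes "continuous_map Z T f" "continuous_map Z T g"
  shows "continuous_map Z T (\<lambda>p. f p \<otimes> g p)"
proof -
  have "continuous_map (prod_topology T T) T (\<lambda>(x, y). x \<otimes> y)"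
    using topological_group by (simp add: topological_group_def)
  from continuous_map_compose[OF continuous_map_pairedI[OF assms] this]
  show ?thesis by (simp add: o_def)
qed

lemma continuous_map_inv:
  assumes "continuous_map Z T f"
  shows "continuous_map Z T (\<lambda>p. inv (f p))"
proof -
  have "continuous_map T T (\<lambda>x. inv x)"
    using topological_group by (simp add: topological_group_def)
  from continuous_map_compose[OF assms this] show ?thesis by (simp add: o_def)
qed

lemma openin_rcos:
  assumes U: "openin T U" and a: "a \<in> carrier G"
  shows "openin T (U #> a)"
proof -
  have "continuous_map T T (\<lambda>x. x \<otimes> inv a)"
    using a by (intro continuous_map_mult continuous_map_inv continuous_map_const[THEN iffD2]
        continuous_map_id[unfolded id_def]) auto
  from openin_continuous_map_preimage[OF this U]
  have "openin T {x \<in> carrier G. x \<otimes> inv a \<in> U}" by simp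
  moreover have "{x \<in> carrier G. x \<otimes> inv a \<in> U} = U #> a"
  proof safe
    fix x assume "x \<in> carrier G" "x \<otimes> inv a \<in> U"
    then show "x \<in> U #> a" using a unfolding r_coset_def by (force simp: m_assoc)
  next
    fix x assume "x \<in> U #> a"
    then obtain u where "u \<in> U" "x = u \<otimes> a" unfolding r_coset_def by blast
    moreover have "U \<subseteq> carrier G" using openin_subset[OF U] by simp
    ultimately show "x \<in> carrier G" "x \<otimes> inv a \<in> U" using a by (auto simp: m_assoc)
  qed
  ultimately show ?thesis by simp
qed

lemma openin_if_rcos_subset:
  assumes N: "subgroup N G" "openin T N" and S: "S \<subseteq> carrier G" "\<And>x. x \<in> S \<Longrightarrow> N #> x \<subseteq> S"
  shows "openin T S"
proof (subst openin_subopen, intro ballI)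
  fix x assume "x \<in> S"
  then have "openin T (N #> x)" "x \<in> N #> x" "N #> x \<subseteq> S"
    using openin_rcos[OF N(2)] rcos_self[OF _ N(1)] S by auto
  then show "\<exists>U. openin T U \<and> x \<in> U \<and> U \<subseteq> S" by blast
qed

lemma continuous_map_rcos_discrete:
  assumes N: "subgroup N G" "openin T N"
  shows "continuous_map T (discrete_topology (carrier (G Mod N))) (\<lambda>x. N #> x)"
proof -
  have "openin T {x \<in> carrier G. N #> x \<in> U}" for U
  proof (rule openin_if_rcos_subset[OF N])
    fix x assume x: "x \<in> {x \<in> carrier G. N #> x \<in> U}"
    show "N #> x \<subseteq> {x \<in> carrier G. N #> x \<in> U}"
    proof
      fix y assume y: "y \<in> N #> x"
      then have "y \<in> carrier G" using subgroup.elemrcos_carrier[OF N(1) is_group] x by blast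
      moreover have "N #> x = N #> y" using repr_independence[OF y _ N(1)] x by blast
      ultimately show "y \<in> {x \<in> carrier G. N #> x \<in> U}" using x by simp
    qed
  qed auto
  then show ?thesis unfolding continuous_map_def by (auto simp: carrier_FactGroup)
qed

lemma closedin_open_subgroup:
  assumes U: "subgroup U G" "openin T U"
  shows "closedin T U"
proof -
  interpret U: subgroup U G by fact
  have "openin T (carrier G - U)"
  proof (rule openin_if_rcos_subset[OF U])
    fix x assume x: "x \<in> carrier G - U"
    show "U #> x \<subseteq> carrier G - U"
    proof
      fix y assume "y \<in> U #> x"
      then obtain u where u: "u \<in> U" "y = u \<otimes> x" unfolding r_coset_def by blast
      have "x = inv u \<otimes> y" using u x by (simp add: m_assoc[symmetric])
      moreover have "y \<in> U \<Longrightarrow> inv u \<otimes> y \<in> U" using u(1) by (intro U.m_closed U.m_inv_closed)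
      ultimately have "y \<notin> U" using x by auto
      then show "y \<in> carrier G - U" using u x by auto
    qed
  qed auto
  then show ?thesis unfolding closedin_def using U.subset by simp
qed

lemma exists_nbhd_mult_subset:
  assumes C: "compactin T C" "openin T C"
  obtains V where "openin T V" "\<one> \<in> V" "\<And>c v. c \<in> C \<Longrightarrow> v \<in> V \<Longrightarrow> c \<otimes> v \<in> C"
proof -
  have Cc: "C \<subseteq> carrier G" using openin_subset[OF C(2)] by simp
  define W where "W = {p \<in> topspace (prod_topology T T). fst p \<otimes> snd p \<in> C}"
  have W: "openin (prod_topology T T) W"
    unfolding W_def using continuous_map_mult[OF continuous_map_fst continuous_map_snd] C(2)
    by (rule openin_continuous_map_preimage)
  have "C \<times> {\<one>} \<subseteq> W" using Cc unfolding W_def by auto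
  then have "\<exists>U V. openin T U \<and> openin T V \<and> C \<subseteq> U \<and> \<one> \<in> V \<and> U \<times> V \<subseteq> W"
    using tube_lemma_left[OF W C(1)] by simp
  then obtain V where V: "openin T V" "\<one> \<in> V" "C \<times> V \<subseteq> W" by blast
  have "c \<otimes> v \<in> C" if "c \<in> C" "v \<in> V" for c v
    using V(3) that unfolding W_def by auto
  then show ?thesis by (rule that[OF V(1,2)])
qed

definition open_subgroup :: "'a set \<Rightarrow> bool" where
  "open_subgroup A \<longleftrightarrow> subgroup A G \<and> openin T A"

lemma open_subgroup_preimage:
  assumes h: "group_hom G H h" and cont: "continuous_map T (discrete_topology (carrier H)) h"
    and S: "subgroup S H"
  shows "open_subgroup {x \<in> carrier G. h x \<in> S}"
proof -
  have "openin T {x \<in> carrier G. h x \<in> S}"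
    using openin_continuous_map_preimage[OF cont, of S] subgroup.subset[OF S] by simp
  then show ?thesis
    unfolding open_subgroup_def using group_hom.subgroup_preimage[OF h S] by simp
qed

text \<open>The index of \<open>U\<close> in \<open>A\<close> is bounded by covering \<open>A\<close> with at most \<open>k\<close> right cosets of \<open>U\<close>;
  \<open>low_index_core A k\<close> is the group \<open>M_k(A)\<close> of the proof sketch.\<close>

definition low_index_subgroups :: "'a set \<Rightarrow> nat \<Rightarrow> 'a set set" where
  "low_index_subgroups A k = {U. subgroup U G \<and> openin T U \<and> U \<subseteq> A \<and>
     (\<exists>S. finite S \<and> card S \<le> k \<and> S \<subseteq> A \<and> A = (\<Union>a\<in>S. U #> a))}"

definition low_index_core :: "'a set \<Rightarrow> nat \<Rightarrow> 'a set" where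
  "low_index_core A k = A \<inter> \<Inter> (low_index_subgroups A k)"

lemma low_index_subgroups_mono: "k \<le> k' \<Longrightarrow> low_index_subgroups A k \<subseteq> low_index_subgroups A k'"
  unfolding low_index_subgroups_def by fastforce

lemma low_index_core_antimono: "k \<le> k' \<Longrightarrow> low_index_core A k' \<subseteq> low_index_core A k"
  unfolding low_index_core_def using low_index_subgroups_mono by blast

lemma low_index_core_subset: "low_index_core A k \<subseteq> A"
  unfolding low_index_core_def by blast

lemma subgroup_low_index_core:
  assumes "subgroup A G"
  shows "subgroup (low_index_core A k) G"
  using subgroups_Inter[of "insert A (low_index_subgroups A k)"] assms
  unfolding low_index_core_def low_index_subgroups_def by auto

lemma one_mem_low_index_core: "subgroup A G \<Longrightarrow> \<one> \<in> low_index_core A k"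
  using subgroup_low_index_core subgroup.one_closed by blast

lemma low_index_subgroups_trans:
  assumes A: "subgroup A G"
    and S': "finite S'" "S' \<subseteq> carrier G" "carrier G = (\<Union>b\<in>S'. A #> b)"
    and U: "U \<in> low_index_subgroups A k"
  shows "U \<in> low_index_subgroups (carrier G) (k * card S')"
proof -
  obtain S where S: "finite S" "card S \<le> k" "S \<subseteq> A" "A = (\<Union>a\<in>S. U #> a)"
    and Us: "subgroup U G" "openin T U" "U \<subseteq> A"
    using U unfolding low_index_subgroups_def by blast
  have Ac: "A \<subseteq> carrier G" using subgroup.subset[OF A] .
  define S2 where "S2 = (\<lambda>(a, b). a \<otimes> b) ` (S \<times> S')"
  have "card S2 \<le> card S * card S'"
    unfolding S2_def using S S' card_image_le[of "S \<times> S'"] by (simp add: card_cartesian_product)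
  also have "\<dots> \<le> k * card S'" using S by simp
  finally have card: "card S2 \<le> k * card S'" .
  have S2c: "S2 \<subseteq> carrier G" unfolding S2_def using S(3) S'(2) Ac by auto
  have "carrier G \<subseteq> (\<Union>c\<in>S2. U #> c)"
  proof
    fix x assume x: "x \<in> carrier G"
    then obtain b where b: "b \<in> S'" "x \<in> A #> b" using S' by blast
    then obtain a' where a': "a' \<in> A" "x = a' \<otimes> b" unfolding r_coset_def by blast
    then obtain a where a: "a \<in> S" "a' \<in> U #> a" using S by blast
    then obtain u where u: "u \<in> U" "a' = u \<otimes> a" unfolding r_coset_def by blast
    have "u \<in> carrier G" "a \<in> carrier G" "b \<in> carrier G" using u a b S(3) S'(2) Us Ac by auto
    then have "x = u \<otimes> (a \<otimes> b)" using u a' by (simp add: m_assoc)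
    then have "x \<in> U #> (a \<otimes> b)" using u unfolding r_coset_def by blast
    moreover have "a \<otimes> b \<in> S2" using a b unfolding S2_def by blast
    ultimately show "x \<in> (\<Union>c\<in>S2. U #> c)" by blast
  qed
  moreover have "(\<Union>c\<in>S2. U #> c) \<subseteq> carrier G"
    using S2c Us Ac unfolding r_coset_def by auto
  moreover have "finite S2" unfolding S2_def using S(1) S'(1) by simp
  ultimately show ?thesis
    unfolding low_index_subgroups_def using Us Ac S2c card by blast
qed

lemma conjugate_low_index_subgroup:
  assumes U: "U \<in> low_index_subgroups (carrier G) j" and g: "g \<in> carrier G"
  shows "{y \<in> carrier G. g \<otimes> y \<otimes> inv g \<in> U} \<in> low_index_subgroups (carrier G) j"
proof -
  obtain S where S: "finite S" "card S \<le> j" "S \<subseteq> carrier G" "carrier G = (\<Union>a\<in>S. U #> a)"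
    and Us: "subgroup U G" "openin T U"
    using U unfolding low_index_subgroups_def by blast
  interpret U: subgroup U G by fact
  define U' where "U' = {y \<in> carrier G. g \<otimes> y \<otimes> inv g \<in> U}"
  have sg: "subgroup U' G"
  proof
    fix x y assume "x \<in> U'" "y \<in> U'"
    moreover have "g \<otimes> (x \<otimes> y) \<otimes> inv g = (g \<otimes> x \<otimes> inv g) \<otimes> (g \<otimes> y \<otimes> inv g)"
      if "x \<in> carrier G" "y \<in> carrier G" using that g by (simp add: m_assoc)
    ultimately show "x \<otimes> y \<in> U'" unfolding U'_def by auto
  next
    fix x assume "x \<in> U'"
    moreover have "g \<otimes> inv x \<otimes> inv g = inv (g \<otimes> x \<otimes> inv g)" if "x \<in> carrier G"
      using that g by (simp add: m_assoc inv_mult_group)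
    ultimately show "inv x \<in> U'" unfolding U'_def by auto
  qed (use g in \<open>auto simp: U'_def\<close>)
  have "continuous_map T T (\<lambda>y. g \<otimes> y \<otimes> inv g)"
    using g by (intro continuous_map_mult continuous_map_id[unfolded id_def]) auto
  from openin_continuous_map_preimage[OF this Us(2)]
  have op: "openin T U'" unfolding U'_def by simp
  define S' where "S' = (\<lambda>a. inv g \<otimes> a \<otimes> g) ` S"
  have "carrier G \<subseteq> (\<Union>a\<in>S'. U' #> a)"
  proof
    fix y assume y: "y \<in> carrier G"
    then obtain a where a: "a \<in> S" "g \<otimes> y \<otimes> inv g \<in> U #> a" using S(4) g by blast
    have ac: "a \<in> carrier G" using a S(3) by auto
    have "g \<otimes> y \<otimes> inv g \<otimes> inv a \<in> U" using U.rcos_module_imp[OF is_group ac a(2)] .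
    moreover have "g \<otimes> (y \<otimes> inv (inv g \<otimes> a \<otimes> g)) \<otimes> inv g = g \<otimes> y \<otimes> inv g \<otimes> inv a"
      using g y ac by (simp add: m_assoc inv_mult_group)
    ultimately have "y \<otimes> inv (inv g \<otimes> a \<otimes> g) \<in> U'" unfolding U'_def using g y ac by simp
    then have "y \<in> U' #> (inv g \<otimes> a \<otimes> g)"
      using subgroup.rcos_module_rev[OF sg is_group _ y] g ac by simp
    then show "y \<in> (\<Union>a\<in>S'. U' #> a)" using a unfolding S'_def by blast
  qed
  moreover have "S' \<subseteq> carrier G" using S(3) g unfolding S'_def by auto
  moreover have "(\<Union>a\<in>S'. U' #> a) \<subseteq> carrier G"
    using \<open>S' \<subseteq> carrier G\<close> subgroup.subset[OF sg] unfolding r_coset_def by auto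
  moreover have "finite S'" "card S' \<le> j"
    unfolding S'_def using S(1,2) card_image_le[OF S(1), of "\<lambda>a. inv g \<otimes> a \<otimes> g"] by auto
  ultimately show ?thesis
    unfolding U'_def[symmetric] low_index_subgroups_def using sg op subgroup.subset[OF sg] by blast
qed

lemma epi_mod_preimage_low_index:
  assumes N: "N \<lhd> G" "openin T N" and A: "subgroup A G" and B: "subgroup B G" and NA: "N \<subseteq> A"
    and F: "epi_mod N A B F" and V: "V \<in> low_index_subgroups B k" and NV: "N \<subseteq> V"
  shows "{x \<in> A. F x \<in> V} \<in> low_index_subgroups A k"
proof -
  have N': "subgroup N G" using normal_imp_subgroup[OF N(1)] .
  obtain S where S: "finite S" "card S \<le> k" "S \<subseteq> B" "B = (\<Union>a\<in>S. V #> a)"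
    and V: "subgroup V G" "openin T V"
    using V unfolding low_index_subgroups_def by blast
  have U: "subgroup {x \<in> A. F x \<in> V} G" using epi_mod_preimage_subgroup[OF N' A B V(1) F NV] .
  have "openin T {x \<in> A. F x \<in> V}"
  proof (rule openin_if_rcos_subset[OF N' N(2)])
    show "{x \<in> A. F x \<in> V} \<subseteq> carrier G" using subgroup.subset[OF A] by blast
  next
    fix x assume x: "x \<in> {x \<in> A. F x \<in> V}"
    show "N #> x \<subseteq> {x \<in> A. F x \<in> V}"
    proof
      fix y assume "y \<in> N #> x"
      then obtain n where n: "n \<in> N" "y = n \<otimes> x" unfolding r_coset_def by blast
      have "F n \<otimes> F x \<in> V"
        using epi_modD(3)[OF F n(1)] NV x subgroup.m_closed[OF V(1)] by blast
      then show "y \<in> {x \<in> A. F x \<in> V}"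
        using epi_mod_mult_mem_iff[OF N' A B V(1) F NV, of n x] n x NA subgroup.m_closed[OF A] by blast
    qed
  qed
  moreover obtain S' where "finite S'" "card S' \<le> card S" "S' \<subseteq> A"
    "A = (\<Union>a\<in>S'. {x \<in> A. F x \<in> V} #> a)"
    using epi_mod_preimage_rcos_cover[OF N' A B V(1) F NV S(1,3,4)] by blast
  ultimately show ?thesis
    unfolding low_index_subgroups_def using U S(2)
    by (intro CollectI conjI exI[of _ S']) auto
qed

lemma epi_mod_low_index_core:
  assumes N: "N \<lhd> G" "openin T N" and A: "subgroup A G" and B: "subgroup B G" and NA: "N \<subseteq> A"
    and F: "epi_mod N A B F" and NB: "N \<subseteq> low_index_core B k"
    and xy: "x \<in> A" "y \<in> A" "x \<otimes> inv y \<in> low_index_core A k"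
  shows "F x \<otimes> inv (F y) \<in> low_index_core B k"
proof -
  have N': "subgroup N G" using normal_imp_subgroup[OF N(1)] .
  have y': "inv y \<in> A" using subgroup.m_inv_closed[OF A xy(2)] .
  have Fc: "F x \<in> carrier G" "F y \<in> carrier G" "F (inv y) \<in> carrier G"
    using epi_modD(1)[OF F] xy(1,2) y' subgroup.subset[OF B] by blast+
  have "F x \<otimes> inv (F y) \<in> V" if V: "V \<in> low_index_subgroups B k" for V
  proof -
    have NV: "N \<subseteq> V" using NB V unfolding low_index_core_def by blast
    have V': "subgroup V G" using V unfolding low_index_subgroups_def by blast
    have "{x \<in> A. F x \<in> V} \<in> low_index_subgroups A k"
      using epi_mod_preimage_low_index[OF N A B NA F V NV] .
    then have "F (x \<otimes> inv y) \<in> V" using xy(3) unfolding low_index_core_def by blast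
    then have "F x \<otimes> F (inv y) \<in> V" using epi_mod_mult_mem_iff[OF N' A B V' F NV xy(1) y'] by blast
    moreover have "F y \<otimes> F (inv y) \<in> V" using epi_mod_inv[OF N' A B F xy(2)] NV by blast
    ultimately have "(F x \<otimes> F (inv y)) \<otimes> inv (F y \<otimes> F (inv y)) \<in> V"
      using subgroup.m_closed[OF V'] subgroup.m_inv_closed[OF V'] by blast
    then show ?thesis using Fc by (simp add: m_assoc inv_mult_group)
  qed
  moreover have "F x \<otimes> inv (F y) \<in> B"
    using epi_modD(1)[OF F] xy(1,2) subgroup.m_closed[OF B] subgroup.m_inv_closed[OF B] by blast
  ultimately show ?thesis unfolding low_index_core_def by blast
qed

lemma epi_mod_low_index_core_inverse:
  assumes N: "N \<lhd> G" "openin T N" and A: "subgroup A G" and B: "subgroup B G" and NB: "N \<subseteq> B"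
    and F': "epi_mod N B A F'" and NA: "N \<subseteq> low_index_core A k"
    and x: "x \<in> A" and wz: "w \<in> B" "z \<in> B" "F' w \<otimes> inv x \<in> N" "w \<otimes> inv z \<in> low_index_core B k"
  shows "F' z \<otimes> inv x \<in> low_index_core A k"
proof -
  have M: "subgroup (low_index_core A k) G" using subgroup_low_index_core[OF A] .
  have c: "F' w \<in> carrier G" "F' z \<in> carrier G" "x \<in> carrier G"
    using epi_modD(1)[OF F'] wz(1,2) x subgroup.subset[OF A] by blast+
  have "F' w \<otimes> inv (F' z) \<in> low_index_core A k"
    using epi_mod_low_index_core[OF N B A NB F' NA wz(1,2,4)] .
  moreover have "F' w \<otimes> inv x \<in> low_index_core A k" using wz(3) NA by blast
  ultimately have "inv (F' w \<otimes> inv (F' z)) \<otimes> (F' w \<otimes> inv x) \<in> low_index_core A k"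
    using subgroup.m_closed[OF M] subgroup.m_inv_closed[OF M] by blast
  then show ?thesis using c by (simp add: m_assoc inv_mult_group)
qed

text \<open>\<open>f\<close> and \<open>g\<close> are mutually inverse isomorphisms between \<open>A\<close> and \<open>B\<close>, and \<open>f\<close> is uniformly
  continuous, all up to the level-\<open>k\<close> cores. For fixed \<open>k\<close> this is a closed condition on \<open>(f, g)\<close>.\<close>

definition approx_iso :: "'a set \<Rightarrow> 'a set \<Rightarrow> nat \<Rightarrow> ('a \<Rightarrow> 'a) \<Rightarrow> ('a \<Rightarrow> 'a) \<Rightarrow> bool" where
  "approx_iso A B k f g \<longleftrightarrow>
     (\<forall>x\<in>A. f x \<in> B) \<and> (\<forall>z\<in>B. g z \<in> A) \<and>
     (\<forall>x\<in>A. \<forall>y\<in>A. f x \<otimes> f y \<otimes> inv (f (x \<otimes> y)) \<in> low_index_core B k) \<and>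
     (\<forall>x\<in>A. \<forall>z\<in>B. f x \<otimes> inv z \<in> low_index_core B k \<longrightarrow> g z \<otimes> inv x \<in> low_index_core A k) \<and>
     (\<forall>x\<in>A. \<forall>z\<in>B. g z \<otimes> inv x \<in> low_index_core A k \<longrightarrow> f x \<otimes> inv z \<in> low_index_core B k) \<and>
     (\<forall>x\<in>A. \<forall>y\<in>A. x \<otimes> inv y \<in> low_index_core A k \<longrightarrow> f x \<otimes> inv (f y) \<in> low_index_core B k)"

text \<open>The lifts are extended by \<open>\<one>\<close> outside \<open>A\<close> and \<open>B\<close> so that they take values in \<open>carrier G\<close>
  everywhere, as points of the product space used below must.\<close>

lemma approx_iso_if_lifts:
  assumes N: "N \<lhd> G" "openin T N" and A: "subgroup A G" and B: "subgroup B G"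
    and NA: "N \<subseteq> low_index_core A k" and NB: "N \<subseteq> low_index_core B k"
    and F: "epi_mod N A B F" and F': "epi_mod N B A F'"
    and F'F: "\<And>x. x \<in> A \<Longrightarrow> F' (F x) \<otimes> inv x \<in> N"
    and FF': "\<And>z. z \<in> B \<Longrightarrow> F (F' z) \<otimes> inv z \<in> N"
  shows "approx_iso A B k (\<lambda>x. if x \<in> A then F x else \<one>) (\<lambda>z. if z \<in> B then F' z else \<one>)"
proof -
  have NA': "N \<subseteq> A" and NB': "N \<subseteq> B" using NA NB low_index_core_subset by blast+
  note FB = epi_modD(1)[OF F] and F'A = epi_modD(1)[OF F']
  show ?thesis unfolding approx_iso_def
  proof (intro conjI ballI impI)
    fix x y assume "x \<in> A" "y \<in> A"
    then show "(if x \<in> A then F x else \<one>) \<otimes> (if y \<in> A then F y else \<one>) \<otimes>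
        inv (if x \<otimes> y \<in> A then F (x \<otimes> y) else \<one>) \<in> low_index_core B k"
      using epi_modD(2)[OF F] NB subgroup.m_closed[OF A] by auto
  next
    fix x z assume x: "x \<in> A" and z: "z \<in> B"
      and "(if x \<in> A then F x else \<one>) \<otimes> inv z \<in> low_index_core B k"
    then show "(if z \<in> B then F' z else \<one>) \<otimes> inv x \<in> low_index_core A k"
      using epi_mod_low_index_core_inverse[OF N A B NB' F' NA x FB[OF x] z F'F[OF x]] by simp
  next
    fix x z assume x: "x \<in> A" and z: "z \<in> B"
      and "(if z \<in> B then F' z else \<one>) \<otimes> inv x \<in> low_index_core A k"
    then show "(if x \<in> A then F x else \<one>) \<otimes> inv z \<in> low_index_core B k"
      using epi_mod_low_index_core_inverse[OF N B A NA' F NB z F'A[OF z] x FF'[OF z]] by simp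
  next
    fix x y assume "x \<in> A" "y \<in> A" "x \<otimes> inv y \<in> low_index_core A k"
    then show "(if x \<in> A then F x else \<one>) \<otimes> inv (if y \<in> A then F y else \<one>) \<in> low_index_core B k"
      using epi_mod_low_index_core[OF N A B NA' F NB] by simp
  qed (use FB F'A in simp_all)
qed

end

section \<open>Profinite groups\<close>

locale profinite = group G for G :: "('a, 'b) monoid_scheme" (structure) +
  fixes T :: "'a topology"
  assumes profinite: "profinite_group G T"

sublocale profinite \<subseteq> top_group
  using profinite by unfold_locales (simp add: profinite_group_def)

context profinite
begin

lemma compact: "compact_space T" and Hausdorff: "Hausdorff_space T"
  and totally_disconnected: "totally_disconnected_space T"
  using profinite by (auto simp: profinite_group_def)

lemma finite_rcos_cover:
  assumes W: "subgroup W G" "openin T W" and A: "subgroup A G" "closedin T A" and WA: "W \<subseteq> A"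
  obtains S where "finite S" "S \<subseteq> A" "A = (\<Union>a\<in>S. W #> a)"
proof -
  have "compactin T A" using closedin_compact_space[OF compact A(2)] .
  moreover have "\<forall>U\<in>(\<lambda>a. W #> a) ` A. openin T U"
    using openin_rcos W subgroup.subset[OF A(1)] by auto
  moreover have "A \<subseteq> \<Union>((\<lambda>a. W #> a) ` A)" using rcos_self[OF _ W(1)] subgroup.subset[OF A(1)] by blast
  ultimately obtain F where F: "finite F" "F \<subseteq> (\<lambda>a. W #> a) ` A" "A \<subseteq> \<Union>F"
    unfolding compactin_def by metis
  then obtain S where S: "S \<subseteq> A" "finite S" "F = (\<lambda>a. W #> a) ` S"
    by (meson finite_subset_image)
  have "(\<Union>a\<in>S. W #> a) \<subseteq> A"
    using S WA subgroup.m_closed[OF A(1)] unfolding r_coset_def by auto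
  then show ?thesis using S F that by blast
qed

lemma exists_clopen_separating:
  assumes x: "x \<in> carrier G" "x \<noteq> \<one>"
  obtains C where "closedin T C" "openin T C" "\<one> \<in> C" "x \<notin> C"
proof -
  have component: "connected_component_of_set T \<one> = {\<one>}"
  proof -
    have "connectedin T (connected_component_of_set T \<one>)"
      by (rule connectedin_connected_component_of)
    then obtain a where "connected_component_of_set T \<one> \<subseteq> {a}"
      using totally_disconnected unfolding totally_disconnected_space_def by blast
    moreover have "\<one> \<in> connected_component_of_set T \<one>"
      by (simp add: connected_component_of_refl)
    ultimately show ?thesis by blast
  qed
  have "separated_between T (connected_component_of_set T \<one>) {x}"
  proof (rule separated_between_compact_connected_component)
    show "locally_compact_space T" by (rule compact_imp_locally_compact_space[OF compact])
    show "connected_component_of_set T \<one> \<in> connected_components_of T"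
      by (simp add: connected_component_in_connected_components_of)
    show "closedin T {x}"
      using x by (simp add: closedin_t1_singleton Hausdorff_imp_t1_space Hausdorff)
    show "compactin T (connected_component_of_set T \<one>)" using component by simp
    show "disjnt (connected_component_of_set T \<one>) {x}" using component x by simp
  qed (rule Hausdorff)
  then obtain C where "closedin T C" "openin T C" "\<one> \<in> C" "x \<notin> C"
    using component unfolding separated_between by auto
  then show ?thesis by (rule that)
qed

text \<open>The witness is the stabiliser of \<open>C\<close> under right translation; it is open because
  \<open>C \<otimes> V \<subseteq> C\<close> for some neighbourhood \<open>V\<close> of \<open>\<one>\<close>.\<close>

lemma exists_open_subgroup_subset_clopen:
  assumes C: "closedin T C" "openin T C" "\<one> \<in> C"
  obtains U where "subgroup U G" "openin T U" "U \<subseteq> C"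
proof -
  have Cc: "C \<subseteq> carrier G" using closedin_subset[OF C(1)] by simp
  obtain V where V: "openin T V" "\<one> \<in> V" and CV: "\<And>c v. c \<in> C \<Longrightarrow> v \<in> V \<Longrightarrow> c \<otimes> v \<in> C"
    using exists_nbhd_mult_subset[OF closedin_compact_space[OF compact C(1)] C(2)] by blast
  define V' where "V' = V \<inter> {v \<in> topspace T. inv v \<in> V}"
  have "openin T {v \<in> topspace T. inv v \<in> V}"
    using continuous_map_inv[OF continuous_map_id[unfolded id_def]] V(1)
    by (rule openin_continuous_map_preimage)
  then have V': "openin T V'" "\<one> \<in> V'"
    unfolding V'_def using V by auto
  define St where "St = {g \<in> carrier G. C #> g = C}"
  have St: "subgroup St G" unfolding St_def using subgroup_rcos_stabilizer[OF Cc] .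
  have V'St: "V' \<subseteq> St"
  proof
    fix v assume v: "v \<in> V'"
    then have vc: "v \<in> carrier G" "v \<in> V" "inv v \<in> V" unfolding V'_def by auto
    have "C #> v \<subseteq> C" "C #> inv v \<subseteq> C" using CV vc unfolding r_coset_def by auto
    have "C = (C #> inv v) #> v" using Cc vc by (simp add: coset_mult_assoc)
    also have "\<dots> \<subseteq> C #> v" using \<open>C #> inv v \<subseteq> C\<close> unfolding r_coset_def by auto
    finally show "v \<in> St" using \<open>C #> v \<subseteq> C\<close> vc unfolding St_def by auto
  qed
  have "openin T St"
  proof (subst openin_subopen, intro ballI)
    fix g assume g: "g \<in> St"
    then have gc: "g \<in> carrier G" unfolding St_def by simp
    have "V' #> g \<subseteq> St"
      using V'St g subgroup.m_closed[OF St] unfolding r_coset_def by auto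
    moreover have "g \<in> V' #> g" using V'(2) gc unfolding r_coset_def by force
    moreover have "openin T (V' #> g)" using openin_rcos[OF V'(1) gc] .
    ultimately show "\<exists>U. openin T U \<and> g \<in> U \<and> U \<subseteq> St" by blast
  qed
  moreover have "St \<subseteq> C"
  proof
    fix g assume g: "g \<in> St"
    have "\<one> \<otimes> g \<in> C #> g" using C(3) unfolding r_coset_def by blast
    then show "g \<in> C" using g unfolding St_def by simp
  qed
  ultimately show ?thesis using St that by blast
qed

lemma exists_open_subgroup_not_containing:
  assumes "x \<in> carrier G" "x \<noteq> \<one>"
  obtains U where "subgroup U G" "openin T U" "x \<notin> U"
proof -
  obtain C where C: "closedin T C" "openin T C" "\<one> \<in> C" and "x \<notin> C"
    using exists_clopen_separating[OF assms] .
  obtain U where "subgroup U G" "openin T U" "U \<subseteq> C"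
    using exists_open_subgroup_subset_clopen[OF C] .
  with \<open>x \<notin> C\<close> that show ?thesis by blast
qed

lemma finite_rcos_cover_carrier:
  assumes "open_subgroup A"
  obtains S where "finite S" "S \<subseteq> carrier G" "carrier G = (\<Union>b\<in>S. A #> b)"
proof -
  have A: "subgroup A G" "openin T A" using assms unfolding open_subgroup_def by auto
  have "closedin T (carrier G)" using closedin_topspace[of T] by simp
  from finite_rcos_cover[OF A subgroup_self this subgroup.subset[OF A(1)]] that
  show ?thesis by blast
qed

lemma finite_carrier_FactGroup:
  assumes N: "N \<lhd> G" "openin T N"
  shows "finite (carrier (G Mod N))"
proof -
  have sN: "subgroup N G" using normal_imp_subgroup[OF N(1)] .
  obtain S where S: "finite S" "S \<subseteq> carrier G" "carrier G = (\<Union>b\<in>S. N #> b)"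
    using finite_rcos_cover_carrier[of N] sN N(2) unfolding open_subgroup_def by blast
  have "carrier (G Mod N) \<subseteq> (\<lambda>a. N #> a) ` S"
    using rcosets_subset_image[OF sN S(2,3)] by (simp add: FactGroup_def)
  then show ?thesis using S(1) finite_surj by blast
qed

end

section \<open>Small profinite groups\<close>

locale small_profinite = profinite +
  assumes finite_open_subgroups_of_index: "\<And>n. n > 0 \<Longrightarrow> finite (open_subgroups_of_index G T n)"
begin

lemma finite_low_index_subgroups_carrier: "finite (low_index_subgroups (carrier G) k)"
proof -
  have "low_index_subgroups (carrier G) k \<subseteq> (\<Union>n\<in>{1..k}. open_subgroups_of_index G T n)"
  proof
    fix U assume "U \<in> low_index_subgroups (carrier G) k"
    then obtain S where S: "finite S" "card S \<le> k" "S \<subseteq> carrier G" "carrier G = (\<Union>a\<in>S. U #> a)"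
      and U: "subgroup U G" "openin T U" unfolding low_index_subgroups_def by blast
    have sub: "rcosets U \<subseteq> (\<lambda>a. U #> a) ` S" using rcosets_subset_image[OF U(1) S(3,4)] .
    have "card (rcosets U) \<le> card ((\<lambda>a. U #> a) ` S)" using card_mono[OF _ sub] S(1) by simp
    also have "\<dots> \<le> k" using card_image_le[OF S(1)] S(2) le_trans by blast
    finally have "card (rcosets U) \<le> k" .
    moreover have "finite (rcosets U)" using finite_subset[OF sub] S(1) by simp
    then have "card (rcosets U) \<ge> 1"
      using subgroup.subgroup_in_rcosets[OF U(1) is_group] by (simp add: Suc_le_eq card_gt_0_iff) blast
    ultimately show "U \<in> (\<Union>n\<in>{1..k}. open_subgroups_of_index G T n)"
      using U unfolding open_subgroups_of_index_def by auto
  qed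
  moreover have "finite (\<Union>n\<in>{1..k}. open_subgroups_of_index G T n)"
    using finite_open_subgroups_of_index by simp
  ultimately show ?thesis by (rule finite_subset)
qed

lemma finite_low_index_subgroups:
  assumes "open_subgroup A"
  shows "finite (low_index_subgroups A k)"
proof -
  obtain S where S: "finite S" "S \<subseteq> carrier G" "carrier G = (\<Union>b\<in>S. A #> b)"
    using finite_rcos_cover_carrier[OF assms] .
  have "low_index_subgroups A k \<subseteq> low_index_subgroups (carrier G) (k * card S)"
    using low_index_subgroups_trans[OF _ S] assms unfolding open_subgroup_def by blast
  then show ?thesis using finite_low_index_subgroups_carrier finite_subset by blast
qed

lemma open_subgroup_low_index_core:
  assumes A: "open_subgroup A"
  shows "open_subgroup (low_index_core A k)"
proof -
  have "openin T (A \<inter> \<Inter> (low_index_subgroups A k))"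
    using A finite_low_index_subgroups[OF A] unfolding open_subgroup_def low_index_subgroups_def
    by (intro openin_Int_Inter) auto
  then show ?thesis
    using subgroup_low_index_core A unfolding open_subgroup_def low_index_core_def by blast
qed

lemma eq_one_if_mem_low_index_cores:
  assumes A: "open_subgroup A" and y: "\<And>k. y \<in> low_index_core A k"
  shows "y = \<one>"
proof (rule ccontr)
  assume "y \<noteq> \<one>"
  moreover have "y \<in> A" using y low_index_core_subset by blast
  moreover have A: "subgroup A G" "openin T A" using A unfolding open_subgroup_def by auto
  ultimately obtain U where U: "subgroup U G" "openin T U" "y \<notin> U"
    using exists_open_subgroup_not_containing[of y] subgroup.subset[OF A(1)] by blast
  have W: "subgroup (U \<inter> A) G" "openin T (U \<inter> A)"
    using U A by (auto intro: subgroups_Inter_pair)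
  obtain S where "finite S" "S \<subseteq> A" "A = (\<Union>a\<in>S. (U \<inter> A) #> a)"
    using finite_rcos_cover[OF W A(1) closedin_open_subgroup[OF A]] by blast
  then have "U \<inter> A \<in> low_index_subgroups A (card S)"
    unfolding low_index_subgroups_def using W by blast
  then have "y \<notin> low_index_core A (card S)" using U unfolding low_index_core_def by blast
  then show False using y by blast
qed

lemma low_index_core_subset_openin:
  assumes A: "open_subgroup A" and V: "openin T V" "\<one> \<in> V"
  shows "\<exists>k. low_index_core A k \<subseteq> V"
proof (rule ccontr)
  assume "\<not> ?thesis"
  then have ne: "low_index_core A k - V \<noteq> {}" for k by blast
  have "closedin T (low_index_core A k - V)" for k
    using closedin_open_subgroup open_subgroup_low_index_core[OF A] V(1)
    unfolding open_subgroup_def by (intro closedin_diff) auto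
  moreover note ne
  moreover have "decseq (\<lambda>k. low_index_core A k - V)"
    unfolding decseq_def using low_index_core_antimono by blast
  ultimately have "(\<Inter>k. low_index_core A k - V) \<noteq> {}"
    by (rule compact_space_imp_nest[OF compact])
  then obtain y where "\<And>k. y \<in> low_index_core A k" "y \<notin> V" by blast
  then show False using eq_one_if_mem_low_index_cores[OF A] V(2) by blast
qed

lemma eq_if_mem_low_index_cores:
  assumes A: "open_subgroup A" and ab: "a \<in> carrier G" "b \<in> carrier G"
    and k: "\<And>k. a \<otimes> inv b \<in> low_index_core A k"
  shows "a = b"
proof -
  have "a = a \<otimes> inv b \<otimes> b" using ab by (simp add: m_assoc)
  then show ?thesis using eq_one_if_mem_low_index_cores[OF A k] ab by simp
qed

lemma low_index_core_normal: "low_index_core (carrier G) j \<lhd> G"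
proof (rule normal_invI)
  have "open_subgroup (carrier G)"
    unfolding open_subgroup_def using subgroup_self openin_topspace[of T] by simp
  then show "subgroup (low_index_core (carrier G) j) G"
    using open_subgroup_low_index_core unfolding open_subgroup_def by blast
next
  fix g x assume g: "g \<in> carrier G" and x: "x \<in> low_index_core (carrier G) j"
  have "g \<otimes> x \<otimes> inv g \<in> U" if "U \<in> low_index_subgroups (carrier G) j" for U
    using conjugate_low_index_subgroup[OF that g] x unfolding low_index_core_def by blast
  moreover have "g \<otimes> x \<otimes> inv g \<in> carrier G" using g x low_index_core_subset by blast
  ultimately show "g \<otimes> x \<otimes> inv g \<in> low_index_core (carrier G) j"
    unfolding low_index_core_def by blast
qed

lemma exists_open_normal_subgroup_subset:
  assumes "openin T V" "\<one> \<in> V"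
  obtains N where "N \<lhd> G" "openin T N" "N \<subseteq> V"
proof -
  have G: "open_subgroup (carrier G)"
    unfolding open_subgroup_def using subgroup_self openin_topspace[of T] by simp
  obtain j where "low_index_core (carrier G) j \<subseteq> V"
    using low_index_core_subset_openin[OF G assms] by blast
  moreover have "openin T (low_index_core (carrier G) j)"
    using open_subgroup_low_index_core[OF G] unfolding open_subgroup_def by blast
  ultimately show ?thesis using that low_index_core_normal by blast
qed

abbreviation map_pair_topology :: "(('a \<Rightarrow> 'a) \<times> ('a \<Rightarrow> 'a)) topology" where
  "map_pair_topology \<equiv> prod_topology (product_topology (\<lambda>_. T) UNIV) (product_topology (\<lambda>_. T) UNIV)"

lemma topspace_map_pair_topology:
  "p \<in> topspace map_pair_topology \<longleftrightarrow> (\<forall>x. fst p x \<in> carrier G) \<and> (\<forall>x. snd p x \<in> carrier G)"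
  by (cases p) (simp add: PiE_UNIV_domain Pi_iff)

lemma continuous_map_eval_fst: "continuous_map map_pair_topology T (\<lambda>p. fst p x)"
  using continuous_map_compose[OF continuous_map_fst continuous_map_product_projection[of x UNIV]]
  by (simp add: o_def)

lemma continuous_map_eval_snd: "continuous_map map_pair_topology T (\<lambda>p. snd p x)"
  using continuous_map_compose[OF continuous_map_snd continuous_map_product_projection[of x UNIV]]
  by (simp add: o_def)

lemma closedin_approx_iso:
  assumes A: "open_subgroup A" and B: "open_subgroup B"
  shows "closedin map_pair_topology {p \<in> topspace map_pair_topology. approx_iso A B k (fst p) (snd p)}"
proof -
  have Ac: "A \<subseteq> carrier G" and Bc: "B \<subseteq> carrier G"
    using A B subgroup.subset unfolding open_subgroup_def by blast+
  have clopen: "closedin T C" "openin T C"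
    if "C \<in> {A, B, low_index_core A k, low_index_core B k}" for C
    using that A B open_subgroup_low_index_core closedin_open_subgroup
    unfolding open_subgroup_def by auto
  show ?thesis unfolding approx_iso_def
    by (intro closedin_Collect_conj closedin_Collect_ball closedin_Collect_imp
        closedin_continuous_map_preimage[where Y = T] closedin_continuous_map_preimage_not_mem[where Y = T]
        continuous_map_mult continuous_map_inv continuous_map_eval_fst continuous_map_eval_snd
        continuous_map_const[THEN iffD2, OF disjI2] clopen insertI1 insertI2)
      (use Ac Bc in auto)
qed

lemma continuous_map_if_low_index_core_uniform:
  assumes A: "open_subgroup A" and B: "open_subgroup B" and fAB: "\<And>x. x \<in> A \<Longrightarrow> f x \<in> B"
    and f: "\<And>k x y. x \<in> A \<Longrightarrow> y \<in> A \<Longrightarrow> x \<otimes> inv y \<in> low_index_core A k \<Longrightarrow>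
                f x \<otimes> inv (f y) \<in> low_index_core B k"
  shows "continuous_map (subtopology T A) (subtopology T B) f"
proof -
  have sA: "subgroup A G" and oA: "openin T A" and oB: "openin T B"
    using A B unfolding open_subgroup_def by blast+
  have Ac: "A \<subseteq> carrier G" and Bc: "B \<subseteq> carrier G"
    using subgroup.subset[OF sA] B subgroup.subset unfolding open_subgroup_def by auto
  have "openin T {x \<in> A. f x \<in> U}" if U: "openin T U" "U \<subseteq> B" for U
  proof (subst openin_subopen, intro ballI)
    fix x assume x: "x \<in> {x \<in> A. f x \<in> U}"
    then have xc: "x \<in> carrier G" "f x \<in> carrier G" using Ac Bc fAB by auto
    have "f x \<otimes> inv (f x) \<in> U #> inv (f x)" using x unfolding r_coset_def by blast
    then have "\<one> \<in> U #> inv (f x)" using xc by simp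
    moreover have "openin T (U #> inv (f x))" using openin_rcos[OF U(1)] xc by simp
    ultimately obtain k where k: "low_index_core B k \<subseteq> U #> inv (f x)"
      using low_index_core_subset_openin[OF B] by blast
    have M: "subgroup (low_index_core A k) G" "openin T (low_index_core A k)"
      using open_subgroup_low_index_core[OF A] unfolding open_subgroup_def by auto
    have "low_index_core A k #> x \<subseteq> {x \<in> A. f x \<in> U}"
    proof
      fix y assume "y \<in> low_index_core A k #> x"
      then obtain m where m: "m \<in> low_index_core A k" "y = m \<otimes> x" unfolding r_coset_def by blast
      have mA: "m \<in> A" using m(1) low_index_core_subset by blast
      then have yA: "y \<in> A" using m(2) x subgroup.m_closed[OF sA] by blast
      have "m \<in> carrier G" using mA Ac by blast
      then have "y \<otimes> inv x = m" using m(2) xc by (simp add: m_assoc)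
      then have "f y \<otimes> inv (f x) \<in> U #> inv (f x)" using f[OF yA, of x] x m(1) k by auto
      then obtain u where u: "u \<in> U" "f y \<otimes> inv (f x) = u \<otimes> inv (f x)" unfolding r_coset_def by blast
      moreover have "f y \<in> carrier G" "u \<in> carrier G" using yA fAB Bc u(1) U(2) by auto
      ultimately show "y \<in> {x \<in> A. f x \<in> U}" using yA xc by simp
    qed
    moreover have "openin T (low_index_core A k #> x)" "x \<in> low_index_core A k #> x"
      using openin_rcos[OF M(2) xc(1)] rcos_self[OF xc(1) M(1)] by auto
    ultimately show "\<exists>V. openin T V \<and> x \<in> V \<and> V \<subseteq> {x \<in> A. f x \<in> U}" by blast
  qed
  moreover have "{x \<in> topspace (subtopology T A). f x \<in> U} = {x \<in> A. f x \<in> U}" for U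
    using Ac by auto
  ultimately show ?thesis
    unfolding continuous_map_def openin_open_subtopology[OF oA] openin_open_subtopology[OF oB]
    using fAB Ac Bc by auto
qed

lemma exists_approx_iso_all_levels:
  assumes A: "open_subgroup A" and B: "open_subgroup B"
    and approx: "\<And>m. \<exists>p\<in>topspace map_pair_topology. \<forall>k\<le>m. approx_iso A B k (fst p) (snd p)"
  obtains f g where "\<And>k. approx_iso A B k f g"
proof -
  define E where "E m = {p \<in> topspace map_pair_topology. \<forall>k\<in>{..m}. approx_iso A B k (fst p) (snd p)}"
    for m
  have "closedin map_pair_topology (E m)" for m
    unfolding E_def by (intro closedin_Collect_ball closedin_approx_iso A B)
  moreover have "E m \<noteq> {}" for m
  proof -
    obtain p where "p \<in> topspace map_pair_topology" "\<forall>k\<le>m. approx_iso A B k (fst p) (snd p)"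
      using approx by blast
    then have "p \<in> E m" unfolding E_def by auto
    then show ?thesis by blast
  qed
  moreover have "decseq E" unfolding decseq_def E_def by auto
  moreover have "compact_space map_pair_topology"
    by (simp add: compact_space_prod_topology compact_space_product_topology compact)
  ultimately have "(\<Inter>m. E m) \<noteq> {}" using compact_space_imp_nest by metis
  then obtain f g where "\<And>m. (f, g) \<in> E m" by auto
  then have "approx_iso A B k f g" for k unfolding E_def by auto
  then show ?thesis by (rule that)
qed

lemma top_group_isomorphic_if_approx_iso_all_levels:
  assumes A: "open_subgroup A" and B: "open_subgroup B" and fg: "\<And>k. approx_iso A B k f g"
  shows "top_group_isomorphic (G\<lparr>carrier := A\<rparr>) (subtopology T A) (G\<lparr>carrier := B\<rparr>) (subtopology T B)"
proof -
  have sA: "subgroup A G" and sB: "subgroup B G" using A B unfolding open_subgroup_def by auto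
  have Ac: "A \<subseteq> carrier G" and Bc: "B \<subseteq> carrier G" using subgroup.subset[OF sA] subgroup.subset[OF sB] .
  have fB: "f x \<in> B" if "x \<in> A" for x using fg[of 0] that unfolding approx_iso_def by blast
  have gA: "g z \<in> A" if "z \<in> B" for z using fg[of 0] that unfolding approx_iso_def by blast
  have f_mult: "f (x \<otimes> y) = f x \<otimes> f y" if "x \<in> A" "y \<in> A" for x y
  proof -
    have "f x \<otimes> f y \<otimes> inv (f (x \<otimes> y)) \<in> low_index_core B k" for k
      using fg[of k] that unfolding approx_iso_def by blast
    then show ?thesis
      using eq_if_mem_low_index_cores[OF B] fB that subgroup.m_closed[OF sA] Bc by (metis m_closed subsetD)
  qed
  have gf: "g (f x) = x" if x: "x \<in> A" for x
  proof -
    have "g (f x) \<otimes> inv x \<in> low_index_core A k" for k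
      using fg[of k] x fB[OF x] one_mem_low_index_core[OF sB] Bc unfolding approx_iso_def by (metis subsetD r_inv)
    then show ?thesis using eq_if_mem_low_index_cores[OF A] gA fB x Ac by blast
  qed
  have fg': "f (g z) = z" if z: "z \<in> B" for z
  proof -
    have "f (g z) \<otimes> inv z \<in> low_index_core B k" for k
      using fg[of k] z gA[OF z] one_mem_low_index_core[OF sA] Ac unfolding approx_iso_def by (metis subsetD r_inv)
    then show ?thesis using eq_if_mem_low_index_cores[OF B] gA fB z Bc by blast
  qed
  have "continuous_map (subtopology T A) (subtopology T B) f"
    using fg unfolding approx_iso_def
    by (intro continuous_map_if_low_index_core_uniform[OF A B fB]) blast+
  moreover have "compact_space (subtopology T A)"
    using closedin_compact_space[OF compact closedin_open_subgroup[OF sA]] A compact_space_subtopology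
    unfolding open_subgroup_def by blast
  moreover have "f ` A = B" using fB gA fg' by force
  moreover have "inj_on f A" using gf by (metis inj_on_inverseI)
  ultimately have "homeomorphic_map (subtopology T A) (subtopology T B) f"
    using continuous_imp_homeomorphic_map Hausdorff_space_subtopology[OF Hausdorff] Ac Bc
    by (metis topspace_eq topspace_subtopology_subset)
  moreover have "f \<in> iso (G\<lparr>carrier := A\<rparr>) (G\<lparr>carrier := B\<rparr>)"
    using fB f_mult \<open>f ` A = B\<close> \<open>inj_on f A\<close> unfolding iso_def hom_def bij_betw_def by auto
  ultimately show ?thesis unfolding top_group_isomorphic_def by blast
qed

lemma approx_iso_if_FactGroups_isomorphic:
  assumes A: "open_subgroup A" and B: "open_subgroup B" and K: "openin T K" "\<one> \<in> K"
    and quotients_iso: "\<And>N. N \<lhd> G \<Longrightarrow> openin T N \<Longrightarrow> N \<subseteq> K \<Longrightarrow> N \<subseteq> A \<Longrightarrow> N \<subseteq> B \<Longrightarrow>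
       (G Mod N)\<lparr>carrier := (\<lambda>x. N #> x) ` A\<rparr> \<cong> (G Mod N)\<lparr>carrier := (\<lambda>x. N #> x) ` B\<rparr>"
  shows "\<exists>p\<in>topspace map_pair_topology. \<forall>k\<le>m. approx_iso A B k (fst p) (snd p)"
proof -
  have sA: "subgroup A G" and sB: "subgroup B G" using A B unfolding open_subgroup_def by auto
  have "openin T (K \<inter> low_index_core A m \<inter> low_index_core B m)"
    using K(1) open_subgroup_low_index_core[OF A] open_subgroup_low_index_core[OF B]
    unfolding open_subgroup_def by auto
  moreover have "\<one> \<in> K \<inter> low_index_core A m \<inter> low_index_core B m"
    using K(2) one_mem_low_index_core sA sB by blast
  ultimately obtain N where N: "N \<lhd> G" "openin T N"
    and NK: "N \<subseteq> K \<inter> low_index_core A m \<inter> low_index_core B m"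
    using exists_open_normal_subgroup_subset by blast
  have NA: "N \<subseteq> low_index_core A k" and NB: "N \<subseteq> low_index_core B k" if "k \<le> m" for k
    using NK low_index_core_antimono[OF that] by blast+
  have "N \<subseteq> A" "N \<subseteq> B" using NA[of m] NB[of m] low_index_core_subset by blast+
  then obtain h where "h \<in> iso ((G Mod N)\<lparr>carrier := (\<lambda>x. N #> x) ` A\<rparr>) ((G Mod N)\<lparr>carrier := (\<lambda>x. N #> x) ` B\<rparr>)"
    using quotients_iso[OF N] NK unfolding is_iso_def by blast
  then obtain F F' where "epi_mod N A B F" "epi_mod N B A F'"
    "\<And>x. x \<in> A \<Longrightarrow> F' (F x) \<otimes> inv x \<in> N" "\<And>z. z \<in> B \<Longrightarrow> F (F' z) \<otimes> inv z \<in> N"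
    using FactGroup_iso_lifts[OF N(1) sA sB \<open>N \<subseteq> A\<close> \<open>N \<subseteq> B\<close>] by blast
  then have "approx_iso A B k (\<lambda>x. if x \<in> A then F x else \<one>) (\<lambda>z. if z \<in> B then F' z else \<one>)"
    if "k \<le> m" for k
    using approx_iso_if_lifts[OF N sA sB NA[OF that] NB[OF that]] by blast
  moreover have "(\<lambda>x. if x \<in> A then F x else \<one>, \<lambda>z. if z \<in> B then F' z else \<one>) \<in> topspace map_pair_topology"
    using epi_modD(1) \<open>epi_mod N A B F\<close> \<open>epi_mod N B A F'\<close> subgroup.subset[OF sA] subgroup.subset[OF sB]
    unfolding topspace_map_pair_topology by auto
  ultimately show ?thesis by force
qed

lemma top_group_isomorphic_if_FactGroups_isomorphic:
  assumes A: "open_subgroup A" and B: "open_subgroup B" and K: "openin T K" "\<one> \<in> K"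
    and quotients_iso: "\<And>N. N \<lhd> G \<Longrightarrow> openin T N \<Longrightarrow> N \<subseteq> K \<Longrightarrow> N \<subseteq> A \<Longrightarrow> N \<subseteq> B \<Longrightarrow>
       (G Mod N)\<lparr>carrier := (\<lambda>x. N #> x) ` A\<rparr> \<cong> (G Mod N)\<lparr>carrier := (\<lambda>x. N #> x) ` B\<rparr>"
  shows "top_group_isomorphic (G\<lparr>carrier := A\<rparr>) (subtopology T A) (G\<lparr>carrier := B\<rparr>) (subtopology T B)"
proof -
  obtain f g where "\<And>k. approx_iso A B k f g"
    using exists_approx_iso_all_levels[OF A B approx_iso_if_FactGroups_isomorphic[OF A B K quotients_iso]]
    by blast
  then show ?thesis using top_group_isomorphic_if_approx_iso_all_levels[OF A B] by blast
qed

end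

theorem proposition3p1:
  fixes G :: "('b, 'm) monoid_scheme"
    and Gt :: "('a, 'n) monoid_scheme"
    and T :: "'a topology"
    and G1 G2 :: "'b set"
    and \<phi> :: "'a \<Rightarrow> 'b"
  assumes "group G" and "finite (carrier G)"
    and "subgroup G1 G" and "subgroup G2 G"
    and "profinite_group Gt T"
    and "\<phi> \<in> hom Gt G" and "\<phi> ` carrier Gt = carrier G"
    and "continuous_map T (discrete_topology (carrier G)) \<phi>"
    and "\<not> top_group_isomorphic
            (Gt\<lparr>carrier := {x \<in> carrier Gt. \<phi> x \<in> G1}\<rparr>) (subtopology T {x \<in> carrier Gt. \<phi> x \<in> G1})
            (Gt\<lparr>carrier := {x \<in> carrier Gt. \<phi> x \<in> G2}\<rparr>) (subtopology T {x \<in> carrier Gt. \<phi> x \<in> G2})"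
    and "\<And>n::nat. n > 0 \<Longrightarrow> finite (open_subgroups_of_index Gt T n)"
  shows "\<exists>(H :: 'a set monoid) \<psi> \<theta>.
           group H \<and> finite (carrier H) \<and>
           \<psi> \<in> hom Gt H \<and> \<psi> ` carrier Gt = carrier H \<and>
           continuous_map T (discrete_topology (carrier H)) \<psi> \<and>
           \<theta> \<in> hom H G \<and>
           (\<forall>x \<in> carrier Gt. \<phi> x = \<theta> (\<psi> x)) \<and>
           \<not> (H\<lparr>carrier := {h \<in> carrier H. \<theta> h \<in> G1}\<rparr> \<cong>
               H\<lparr>carrier := {h \<in> carrier H. \<theta> h \<in> G2}\<rparr>)"
proof (rule ccontr)
  assume no_quotient: "\<not> ?thesis"
  have "group Gt" using assms(5) unfolding profinite_group_def topological_group_def by blast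
  interpret small_profinite Gt T
    by (intro small_profinite.intro profinite.intro profinite_axioms.intro
        small_profinite_axioms.intro \<open>group Gt\<close> assms(5,10))
  interpret \<phi>: group_hom Gt G \<phi>
    by (intro group_hom.intro group_hom_axioms.intro \<open>group Gt\<close> assms(1,6))
  let ?A = "\<lambda>S. {x \<in> carrier Gt. \<phi> x \<in> S}"
  have A: "open_subgroup (?A S)" if "subgroup S G" for S
    using open_subgroup_preimage[OF \<phi>.group_hom_axioms assms(8) that] .
  have "top_group_isomorphic (Gt\<lparr>carrier := ?A G1\<rparr>) (subtopology T (?A G1))
                              (Gt\<lparr>carrier := ?A G2\<rparr>) (subtopology T (?A G2))"
  proof (rule top_group_isomorphic_if_FactGroups_isomorphic[OF A[OF assms(3)] A[OF assms(4)]])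
    show "openin T (?A {\<one>\<^bsub>G\<^esub>})" "\<one>\<^bsub>Gt\<^esub> \<in> ?A {\<one>\<^bsub>G\<^esub>}"
      using A[OF \<phi>.H.triv_subgroup] unfolding open_subgroup_def by auto
  next
    fix N assume N: "N \<lhd> Gt" "openin T N" "N \<subseteq> ?A {\<one>\<^bsub>G\<^esub>}"
    obtain \<theta> where \<theta>: "\<theta> \<in> hom (Gt Mod N) G" "\<And>x. x \<in> carrier Gt \<Longrightarrow> \<theta> (N #>\<^bsub>Gt\<^esub> x) = \<phi> x"
      and preimage: "\<And>S. {y \<in> carrier (Gt Mod N). \<theta> y \<in> S} = (\<lambda>x. N #>\<^bsub>Gt\<^esub> x) ` ?A S"
      using \<phi>.FactGroup_universal_kernel_preimage[OF N(1)] N(3) unfolding kernel_def by auto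
    note quotient = finite_carrier_FactGroup[OF N(1,2)] normal.factorgroup_is_group[OF N(1)]
      continuous_map_rcos_discrete[OF normal_imp_subgroup[OF N(1)] N(2)] normal.r_coset_hom_Mod[OF N(1)]
    show "(Gt Mod N)\<lparr>carrier := (\<lambda>x. N #>\<^bsub>Gt\<^esub> x) ` ?A G1\<rparr> \<cong>
          (Gt Mod N)\<lparr>carrier := (\<lambda>x. N #>\<^bsub>Gt\<^esub> x) ` ?A G2\<rparr>"
    proof (rule ccontr)
      assume not_iso: "\<not> ?thesis"
      show False
        by (rule notE[OF no_quotient],
            intro exI[of _ "Gt Mod N"] exI[of _ "\<lambda>x. N #>\<^bsub>Gt\<^esub> x"] exI[of _ \<theta>])
          (use not_iso quotient \<theta> in \<open>simp add: preimage carrier_FactGroup[symmetric]\<close>)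
    qed
  qed
  then show False using assms(9) by blast
qed

end
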